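(* Let $(D,\chi)$ be a shaped oriented link diagram with a flattening $\mathfrak f$, and let $c$ be a non-pinched crossing of $D$. If $\mathfrak f'$ is the flattening that agrees with $\mathfrak f$ except that the parameter $\kappa$ at $c$ is replaced by $\kappa+k$ for some $k\in\mathbb Z$, then $\mathcal V(c,\mathfrak f')=\mathcal V(c,\mathfrak f)$ in $\mathbb C/2\pi^2 i\mathbb Z$. That is, the volume of a crossing does not depend on the choice of $\kappa$.
   Context: Oriented link diagram $D$; segments are edges of its underlying $4$-valent planar graph, regions are components of the complement. At each crossing, rotate so both strands point right; label incoming upper-left segment $1$, incoming lower-left segment $2$, outgoing lower-right segment $1'$ (continuation of $1$), outgoing upper-right segment $2'$ (continuation of $2$); regions $N$ (top), $S$ (bottom), $W$ (left, between $1$ and $2$), $E$ (right, between $2'$ and $1'$); $\epsilon=\pm1$ is the crossing sign. A shaping assigns $\chi_i=(a_i,b_i,m_i)\in(\mathbb C^\times)^3$ to segments satisfying, at each crossing, $m_{1'}=m_1,m_{2'}=m_2$ and (positive crossing) $A=1-\frac{m_1b_1}{b_2}(1-\frac{a_1}{m_1})(1-\frac{1}{m_2a_2})$, $a_{1'}=a_1/A$, $a_{2'}=a_2A$, $b_{1'}=\frac{m_2b_2}{m_1}(1-m_2a_2(1-\frac{b_2}{m_1b_1}))^{-1}$, $b_{2'}=b_1(1-\frac{m_1}{a_1}(1-\frac{b_2}{m_1b_1}))$, or (negative crossing) $\tilde A=1-\frac{b_2}{m_1b_1}(1-m_1a_1)(1-\frac{m_2}{a_2})$, $a_{1'}=a_1/\tilde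 A$, $a_{2'}=a_2\tilde A$, $b_{1'}=\frac{m_2b_2}{m_1}(1-\frac{a_2}{m_2}(1-\frac{m_1b_1}{b_2}))$, $b_{2'}=b_1(1-\frac{1}{m_1a_1}(1-\frac{m_1b_1}{b_2}))^{-1}$, all values finite and nonzero. A crossing is pinched if $b_{2'}=b_1$. A flattening consists of $\mu_j$ per component ($e^{2\pi i\mu_j}=m_j$), $\beta_k$ per segment ($e^{2\pi i\beta_k}=b_k$), $\gamma_R$ per region ($e^{2\pi i(\gamma_{R'}-\gamma_R)}=a_k$ when $R'$, $R$ lie to the right, left of segment $k$), and at each non-pinched crossing $\kappa$ with $e^{2\pi i\kappa}=e^{2\pi i\gamma_N}/(1-(b_{2'}/b_1)^\epsilon)$. Lifted dilogarithm: for $w=e^{\zeta^0}\ne1$ with $e^{\zeta^1}(1-w)=1$, $p^0=(\zeta^0-\operatorname{Log}w)/2\pi i$, $p^1=(\zeta^1+\operatorname{Log}(1-w))/2\pi i$, $\mathcal L(\zeta^0,\zeta^1)=\operatorname{Li}_2(w)+\frac12\operatorname{Log}w\operatorname{Log}(1-w)-\frac{\pi^2}6+\pi i(p^0\operatorname{Log}(1-w)+p^1\operatorname{Log}w)\in\mathbb C/2\pi^2\mathbb Z$ (principal Log; continuous extension understood). At a non-pinched crossing: $\zeta_N^0=2\pi i\epsilon(\beta_{2'}-\beta_1)$, $\zeta_N^1=2\pi i(\kappa-\gamma_N)$; $\zeta_W^0=2\pi i\epsilon(\beta_2-\beta_1-\mu_1)$, $\zeta_W^1=2\pi i(\kappa-\gamma_W+\epsilon\mu_1)$;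 $\zeta_S^0=2\pi i\epsilon(\beta_2-\beta_{1'}+\mu_2-\mu_1)$, $\zeta_S^1=2\pi i(\kappa-\gamma_S+\epsilon(\mu_1-\mu_2))$; $\zeta_E^0=2\pi i\epsilon(\beta_{2'}-\beta_{1'}+\mu_2)$, $\zeta_E^1=2\pi i(\kappa-\gamma_E-\epsilon\mu_2)$, and $\mathcal V(c,\mathfrak f)=-i\epsilon[\mathcal L(\zeta_N^0,\zeta_N^1)-\mathcal L(\zeta_W^0,\zeta_W^1)+\mathcal L(\zeta_S^0,\zeta_S^1)-\mathcal L(\zeta_E^0,\zeta_E^1)]\in\mathbb C/2\pi^2 i\mathbb Z$. *)

theory Defs
  imports "HOL-Analysis.Analysis"
begin

text \<open>Type variables:
  's segments, 'r regions, 'x crossings, 'k link components.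
  At each crossing (rotated so both strands point right):
  seg1 = incoming upper-left segment 1, seg2 = incoming lower-left segment 2,
  seg1' = outgoing lower-right segment 1' (continuation of 1),
  seg2' = outgoing upper-right segment 2' (continuation of 2);
  regions N, S, W, E; crossing sign eps.  For every segment, lreg / rreg are the
  regions lying to the left / right of it (w.r.t. its orientation).\<close>

record ('s, 'r, 'x, 'k) diagram =
  d_comp :: "'s \<Rightarrow> 'k"
  d_lreg :: "'s \<Rightarrow> 'r"
  d_rreg :: "'s \<Rightarrow> 'r"
  d_seg1 :: "'x \<Rightarrow> 's"
  d_seg2 :: "'x \<Rightarrow> 's"
  d_seg1' :: "'x \<Rightarrow> 's"
  d_seg2' :: "'x \<Rightarrow> 's"
  d_N :: "'x \<Rightarrow> 'r"
  d_S :: "'x \<Rightarrow> 'r"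
  d_W :: "'x \<Rightarrow> 'r"
  d_E :: "'x \<Rightarrow> 'r"
  d_eps :: "'x \<Rightarrow> int"

definition wf_diagram :: "('s, 'r, 'x, 'k, 'z) diagram_scheme \<Rightarrow> bool" where
  "wf_diagram D \<longleftrightarrow>
    (\<forall>c. (d_eps D c = 1 \<or> d_eps D c = -1)
       \<and> d_comp D (d_seg1' D c) = d_comp D (d_seg1 D c)
       \<and> d_comp D (d_seg2' D c) = d_comp D (d_seg2 D c)
       \<and> d_lreg D (d_seg1 D c) = d_N D c \<and> d_rreg D (d_seg1 D c) = d_W D c
       \<and> d_lreg D (d_seg2 D c) = d_W D c \<and> d_rreg D (d_seg2 D c) = d_S D c
       \<and> d_lreg D (d_seg1' D c) = d_E D c \<and> d_rreg D (d_seg1' D c) = d_S D c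
       \<and> d_lreg D (d_seg2' D c) = d_N D c \<and> d_rreg D (d_seg2' D c) = d_E D c)"

definition shaping_pos_at ::
  "complex \<Rightarrow> complex \<Rightarrow> complex \<Rightarrow> complex \<Rightarrow> complex \<Rightarrow> complex \<Rightarrow>
   complex \<Rightarrow> complex \<Rightarrow> complex \<Rightarrow> complex \<Rightarrow> bool" where
  "shaping_pos_at a1 b1 m1 a2 b2 m2 a1' b1' a2' b2' \<longleftrightarrow>
    (let A = 1 - (m1 * b1 / b2) * (1 - a1 / m1) * (1 - 1 / (m2 * a2)) in
       a1' = a1 / A \<and> a2' = a2 * A
     \<and> b1' = (m2 * b2 / m1) * inverse (1 - m2 * a2 * (1 - b2 / (m1 * b1)))
     \<and> b2' = b1 * (1 - (m1 / a1) * (1 - b2 / (m1 * b1))))"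

definition shaping_neg_at ::
  "complex \<Rightarrow> complex \<Rightarrow> complex \<Rightarrow> complex \<Rightarrow> complex \<Rightarrow> complex \<Rightarrow>
   complex \<Rightarrow> complex \<Rightarrow> complex \<Rightarrow> complex \<Rightarrow> bool" where
  "shaping_neg_at a1 b1 m1 a2 b2 m2 a1' b1' a2' b2' \<longleftrightarrow>
    (let At = 1 - (b2 / (m1 * b1)) * (1 - m1 * a1) * (1 - m2 / a2) in
       a1' = a1 / At \<and> a2' = a2 * At
     \<and> b1' = (m2 * b2 / m1) * (1 - (a2 / m2) * (1 - m1 * b1 / b2))
     \<and> b2' = b1 * inverse (1 - (1 / (m1 * a1)) * (1 - m1 * b1 / b2)))"

text \<open>A shaping: (a,b,m) nonzero on every segment, with the crossing relations.
  (Since all values must be finite and nonzero, the requirement that the left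
  sides are nonzero forces A, At and the inverted quantities to be nonzero.)\<close>

definition shaping ::
  "('s, 'r, 'x, 'k, 'z) diagram_scheme \<Rightarrow> ('s \<Rightarrow> complex) \<Rightarrow> ('s \<Rightarrow> complex) \<Rightarrow> ('s \<Rightarrow> complex) \<Rightarrow> bool" where
  "shaping D a b m \<longleftrightarrow>
    (\<forall>s. a s \<noteq> 0 \<and> b s \<noteq> 0 \<and> m s \<noteq> 0)
    \<and> (\<forall>c. let s1 = d_seg1 D c; s2 = d_seg2 D c; s1' = d_seg1' D c; s2' = d_seg2' D c in
          m s1' = m s1 \<and> m s2' = m s2
        \<and> (if d_eps D c = 1
           then shaping_pos_at (a s1) (b s1) (m s1) (a s2) (b s2) (m s2) (a s1') (b s1') (a s2') (b s2')
           else shaping_neg_at (a s1) (b s1) (m s1) (a s2) (b s2) (m s2) (a s1') (b s1') (a s2') (b s2')))"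

definition pinched :: "('s, 'r, 'x, 'k, 'z) diagram_scheme \<Rightarrow> ('s \<Rightarrow> complex) \<Rightarrow> 'x \<Rightarrow> bool" where
  "pinched D b c \<longleftrightarrow> b (d_seg2' D c) = b (d_seg1 D c)"

definition flattening ::
  "('s, 'r, 'x, 'k, 'z) diagram_scheme \<Rightarrow> ('s \<Rightarrow> complex) \<Rightarrow> ('s \<Rightarrow> complex) \<Rightarrow> ('s \<Rightarrow> complex) \<Rightarrow>
   ('k \<Rightarrow> complex) \<Rightarrow> ('s \<Rightarrow> complex) \<Rightarrow> ('r \<Rightarrow> complex) \<Rightarrow> ('x \<Rightarrow> complex) \<Rightarrow> bool" where
  "flattening D a b m mu beta gam kap \<longleftrightarrow>
    (\<forall>s. exp (2 * pi * \<i> * mu (d_comp D s)) = m s)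
    \<and> (\<forall>s. exp (2 * pi * \<i> * beta s) = b s)
    \<and> (\<forall>s. exp (2 * pi * \<i> * (gam (d_rreg D s) - gam (d_lreg D s))) = a s)
    \<and> (\<forall>c. \<not> pinched D b c \<longrightarrow>
         exp (2 * pi * \<i> * kap c) =
           exp (2 * pi * \<i> * gam (d_N D c)) / (1 - (b (d_seg2' D c) / b (d_seg1 D c)) powi (d_eps D c)))"

text \<open>Principal dilogarithm via its integral representation
  Li2 z = - int_0^1 Log(1 - t z)/t dt with the principal logarithm (argument in
  (-pi, pi]).  This is the principal branch off the cut [1,oo) and on the cut
  it gives the continuous extension consistent with the principal values of
  Log(1-w) used in the lifted dilogarithm.\<close>

definition Li2 :: "complex \<Rightarrow> complex" where
  "Li2 z = - integral {0..1} (\<lambda>t::real. Ln (1 - complex_of_real t * z) / complex_of_real t)"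

definition lifted_dilog :: "complex \<Rightarrow> complex \<Rightarrow> complex" where
  "lifted_dilog z0 z1 =
    (let w = exp z0;
         p0 = (z0 - Ln w) / (2 * pi * \<i>);
         p1 = (z1 + Ln (1 - w)) / (2 * pi * \<i>)
     in Li2 w + Ln w * Ln (1 - w) / 2 - pi\<^sup>2 / 6
        + pi * \<i> * (p0 * Ln (1 - w) + p1 * Ln w))"

text \<open>A representative in C of V(c,f) in C / 2 pi^2 i Z.\<close>

definition crossing_volume ::
  "('s, 'r, 'x, 'k, 'z) diagram_scheme \<Rightarrow> ('k \<Rightarrow> complex) \<Rightarrow> ('s \<Rightarrow> complex) \<Rightarrow> ('r \<Rightarrow> complex) \<Rightarrow>
   ('x \<Rightarrow> complex) \<Rightarrow> 'x \<Rightarrow> complex" where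
  "crossing_volume D mu beta gam kap c =
    (let e = complex_of_int (d_eps D c);
         mu1 = mu (d_comp D (d_seg1 D c)); mu2 = mu (d_comp D (d_seg2 D c));
         b1 = beta (d_seg1 D c); b2 = beta (d_seg2 D c);
         b1' = beta (d_seg1' D c); b2' = beta (d_seg2' D c);
         k = kap c; tpi = 2 * pi * \<i>;
         LN = lifted_dilog (tpi * e * (b2' - b1)) (tpi * (k - gam (d_N D c)));
         LW = lifted_dilog (tpi * e * (b2 - b1 - mu1)) (tpi * (k - gam (d_W D c) + e * mu1));
         LS = lifted_dilog (tpi * e * (b2 - b1' + mu2 - mu1)) (tpi * (k - gam (d_S D c) + e * (mu1 - mu2)));
         LE = lifted_dilog (tpi * e * (b2' - b1' + mu2)) (tpi * (k - gam (d_E D c) - e * mu2))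
     in - \<i> * e * (LN - LW + LS - LE))"

end

theory Submission
  imports Defs
begin

text \<open>Shifting \<open>\<kappa>\<close> by \<open>k\<close> shifts every second argument \<open>\<zeta>\<^sup>1\<close> by \<open>2\<pi>ik\<close>, which
  changes \<open>L(\<zeta>\<^sup>0, \<zeta>\<^sup>1)\<close> by \<open>\<pi>ik Log (exp \<zeta>\<^sup>0)\<close>.  The four first arguments
  have vanishing alternating sum, so the alternating sum of their logarithms lies in
  \<open>2\<pi>i\<int>\<close> and the volume changes by a multiple of \<open>2\<pi>\<^sup>2i\<close>.\<close>

lemma Ln_exp_eq_plus_2pi_int: "\<exists>n::int. Ln (exp z) = z + 2 * pi * \<i> * of_int n"
proof -
  have "exp (Ln (exp z)) = exp z" by simp
  then obtain n :: int where "Ln (exp z) = z + of_int (2 * n) * pi * \<i>"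
    unfolding exp_eq by blast
  then show ?thesis by (intro exI[of _ n]) (simp add: algebra_simps)
qed

lemma lifted_dilog_shift_second:
  "lifted_dilog z0 (z1 + 2 * pi * \<i> * of_int k) = lifted_dilog z0 z1 + pi * \<i> * of_int k * Ln (exp z0)"
proof -
  have "(z1 + 2 * pi * \<i> * of_int k + Ln (1 - exp z0)) / (2 * pi * \<i>)
        = (z1 + Ln (1 - exp z0)) / (2 * pi * \<i>) + of_int k"
    by (simp add: field_simps)
  then show ?thesis
    unfolding lifted_dilog_def Let_def by (simp add: algebra_simps)
qed

lemma Ln_exp_alternating_sum:
  assumes "zN - zW + zS - zE = 0"
  shows "\<exists>n::int. Ln (exp zN) - Ln (exp zW) + Ln (exp zS) - Ln (exp zE) = 2 * pi * \<i> * of_int n"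
proof -
  obtain nN nW nS nE :: int where
    "Ln (exp zN) = zN + 2 * pi * \<i> * of_int nN" "Ln (exp zW) = zW + 2 * pi * \<i> * of_int nW"
    "Ln (exp zS) = zS + 2 * pi * \<i> * of_int nS" "Ln (exp zE) = zE + 2 * pi * \<i> * of_int nE"
    by (meson Ln_exp_eq_plus_2pi_int)
  then have "Ln (exp zN) - Ln (exp zW) + Ln (exp zS) - Ln (exp zE)
      = 2 * pi * \<i> * of_int (nN - nW + nS - nE)"
    using assms by (simp add: algebra_simps)
  then show ?thesis by blast
qed

lemma alternating_lifted_dilog_sum_shift:
  fixes \<epsilon> k :: int
  assumes "zN - zW + zS - zE = 0"
    and "yN' = yN + 2 * pi * \<i> * of_int k" "yW' = yW + 2 * pi * \<i> * of_int k"
    and "yS' = yS + 2 * pi * \<i> * of_int k" "yE' = yE + 2 * pi * \<i> * of_int k"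
  shows "\<exists>n::int.
    - \<i> * of_int \<epsilon> * (lifted_dilog zN yN' - lifted_dilog zW yW' + lifted_dilog zS yS' - lifted_dilog zE yE')
    = - \<i> * of_int \<epsilon> * (lifted_dilog zN yN - lifted_dilog zW yW + lifted_dilog zS yS - lifted_dilog zE yE)
      + 2 * pi\<^sup>2 * \<i> * of_int n"
proof -
  obtain m :: int
    where m: "Ln (exp zN) - Ln (exp zW) + Ln (exp zS) - Ln (exp zE) = 2 * pi * \<i> * of_int m"
    using Ln_exp_alternating_sum[OF assms(1)] by blast
  have "- \<i> * of_int \<epsilon> * (lifted_dilog zN yN' - lifted_dilog zW yW' + lifted_dilog zS yS' - lifted_dilog zE yE')
    = - \<i> * of_int \<epsilon> * (lifted_dilog zN yN - lifted_dilog zW yW + lifted_dilog zS yS - lifted_dilog zE yE)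
      - \<i> * of_int \<epsilon> * (pi * \<i> * of_int k)
        * (Ln (exp zN) - Ln (exp zW) + Ln (exp zS) - Ln (exp zE))"
    unfolding assms(2-5) lifted_dilog_shift_second by (simp add: algebra_simps)
  also have "\<dots> = - \<i> * of_int \<epsilon> * (lifted_dilog zN yN - lifted_dilog zW yW + lifted_dilog zS yS - lifted_dilog zE yE)
      + 2 * pi\<^sup>2 * \<i> * of_int (\<epsilon> * k * m)"
    unfolding m by (simp add: algebra_simps power2_eq_square)
  finally show ?thesis by blast
qed

theorem lemma3p4:
  fixes D :: "('s, 'r, 'x, 'k) diagram"
    and a b m :: "'s \<Rightarrow> complex"
    and mu :: "'k \<Rightarrow> complex" and beta :: "'s \<Rightarrow> complex"
    and gam :: "'r \<Rightarrow> complex" and kap :: "'x \<Rightarrow> complex"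
    and c :: 'x and k :: int
  assumes "wf_diagram D"
    and "shaping D a b m"
    and "flattening D a b m mu beta gam kap"
    and "\<not> pinched D b c"
  shows "\<exists>n::int. crossing_volume D mu beta gam (kap(c := kap c + of_int k)) c
                 = crossing_volume D mu beta gam kap c + 2 * pi\<^sup>2 * \<i> * of_int n"
  unfolding crossing_volume_def Let_def fun_upd_same
  by (rule alternating_lifted_dilog_sum_shift) (simp_all add: algebra_simps)

end
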